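(* Let $X$ be a compact, Hausdorff, second-countable topological space, and let $\mathcal{Y}$ be a non-empty weak-$*$ compact subset of $\mathcal{M}(X)$. For a measure $\mu_0\in\mathcal{M}(X)$ the following are equivalent: (i) for every $f\in C^0(X)$ with $\int_X f\,d\mu_0<0$ there exists $\mu\in\mathcal{Y}$ with $\int_X f\,d\mu\le 0$; (ii) for every $f\in C^0(X)$ with $\int_X f\,d\mu_0=0$ there exists $\mu\in\mathcal{Y}$ with $\int_X f\,d\mu\le0$; (iii) $\mu_0$ belongs to the weak-$*$ closure of the convex hull of the positive cone over $\mathcal{Y}$; (iv) there exists a sequence $\{\mu_k\}$ in $\mathcal{Y}$ such that \[ \lim_{k\to\infty}\frac1k\sum_{i=1}^k\frac{1}{\mu_i(X)}\int_X f\,d\mu_i=\frac{1}{\mu_0(X)}\int_X f\,d\mu_0\quad\text{for all } f\in C^0(X). \]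
   Context: $C^0(X)$ is the space of continuous real functions on $X$ with the sup norm. $\mathcal{M}(X)$ is the set of (positive) Radon measures on $X$, identified via the Riesz representation theorem with positive bounded linear functionals on $C^0(X)$; the weak-$*$ topology on $\mathcal{M}(X)$ is the coarsest topology making $\mu\mapsto\int_X f\,d\mu$ continuous for every $f\in C^0(X)$. The positive cone over $\mathcal{Y}$ is $\{\lambda\mu:\lambda>0,\mu\in\mathcal{Y}\}$, and its convex hull is the set of finite convex combinations of its elements. *)

theory Defs
  imports "HOL-Analysis.Analysis"
begin

definition C0 :: "('a::topological_space \<Rightarrow> real) set" where
  "C0 = {f. continuous_on UNIV f}"

text \<open>M(X): nonzero positive finite Borel measures on X. On a compact metrizable
  (compact Hausdorff second-countable) space these are exactly the nonzero Radon measures.\<close>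
definition radon_measures :: "'a::topological_space measure set" where
  "radon_measures = {M. sets M = sets borel \<and> finite_measure M \<and> emeasure M UNIV \<noteq> 0}"

definition weak_star_topology :: "'a::topological_space measure topology" where
  "weak_star_topology = topology_generated_by
     {{\<mu> \<in> radon_measures. (\<integral>x. f x \<partial>\<mu>) \<in> U} | f U. f \<in> C0 \<and> open U}"

definition pos_cone :: "'a::topological_space measure set \<Rightarrow> 'a measure set" where
  "pos_cone Y = {scale_measure (ennreal l) \<mu> | l \<mu>. l > 0 \<and> \<mu> \<in> Y}"

definition meas_convex_hull :: "'a::topological_space measure set \<Rightarrow> 'a measure set" where
  "meas_convex_hull S = {\<nu>. \<exists>(I::nat set) c m. finite I \<and> I \<noteq> {} \<and>
      (\<forall>i\<in>I. c i \<ge> (0::real) \<and> m i \<in> S) \<and> (\<Sum>i\<in>I. c i) = 1 \<and>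
      sets \<nu> = sets borel \<and>
      (\<forall>A\<in>sets borel. emeasure \<nu> A = (\<Sum>i\<in>I. ennreal (c i) * emeasure (m i) A))}"

end

theory Submission
  imports Defs
begin

text \<open>
  Condition (ii) is equivalent to the herding condition: for every test function \<open>g\<close> some
  \<open>\<mu> \<in> Y\<close> has normalized integral of \<open>g\<close> at most that of \<open>\<mu>0\<close>. Under this condition one can herd.
  Fix a sequence \<open>e j\<close>, uniformly dense in \<open>C(X)\<close> up to scaling and with \<open>\<bar>e j\<bar> \<le> 2 ^ -(j + 1)\<close>,
  and choose \<open>\<mu> (k + 1) \<in> Y\<close> to do at least as well as \<open>\<mu>0\<close> on the test function \<open>\<Sum>j<k. S k j * e j\<close>,
  where \<open>S k j\<close> is the accumulated discrepancy of \<open>\<mu> 1, \<dots>, \<mu> k\<close> against \<open>\<mu>0\<close> on \<open>e j\<close>. Then the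
  cross term in the squared length of \<open>S (k + 1)\<close> has the right sign, so this length is \<open>O(k)\<close>
  and all Cesaro discrepancies vanish: this is (iv). Rescaling the \<open>\<mu> i\<close> to the mass of \<open>\<mu>0\<close>
  and averaging turns (iv) into a sequence in the convex hull of the positive cone converging
  weak-* to \<open>\<mu>0\<close>, which is (iii). From (iii), the weak-* open set where the integral of \<open>f\<close> is
  negative contains \<open>\<mu>0\<close> and hence meets the hull, which is impossible if \<open>f\<close> has positive
  integral against every measure in \<open>Y\<close>: this is (i). Finally (i) gives (ii) by compactness:
  if \<open>f\<close> has positive integral on \<open>Y\<close>, the integral exceeds \<open>\<epsilon> * \<mu>(X)\<close> uniformly on \<open>Y\<close>, and (i)
  applied to \<open>f - \<epsilon>\<close> gives a contradiction.
\<close>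

lemma C0_const [simp]: "(\<lambda>x. c) \<in> C0"
  by (simp add: C0_def)

lemma C0_diff: "f \<in> C0 \<Longrightarrow> g \<in> C0 \<Longrightarrow> (\<lambda>x. f x - g x) \<in> C0"
  by (auto simp: C0_def intro!: continuous_intros)

lemma C0_cmult: "f \<in> C0 \<Longrightarrow> (\<lambda>x. c * f x) \<in> C0"
  by (auto simp: C0_def intro!: continuous_intros)

lemma C0_sum: "(\<And>l. l \<in> L \<Longrightarrow> h l \<in> C0) \<Longrightarrow> (\<lambda>x. \<Sum>l\<in>L. h l x) \<in> C0"
  by (auto simp: C0_def intro!: continuous_intros)

lemma C0_borel_measurable: "f \<in> C0 \<Longrightarrow> f \<in> borel_measurable borel"
  by (simp add: C0_def borel_measurable_continuous_onI)

lemma C0_bounded: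
  assumes "compact (UNIV :: 'a::topological_space set)" and "f \<in> C0"
  obtains B where "B \<ge> 0" "\<And>x::'a. \<bar>f x\<bar> \<le> B"
proof -
  have "compact (range f)"
    using assms compact_continuous_image by (auto simp: C0_def)
  then obtain B where "\<forall>y\<in>range f. norm y \<le> B"
    using compact_imp_bounded bounded_iff by metis
  then show thesis
    using that[of B] by (metis abs_ge_zero order_trans real_norm_def rangeI)
qed

lemma borel_measurable_sets_borel:
  "sets N = sets borel \<Longrightarrow> f \<in> borel_measurable borel \<Longrightarrow> f \<in> borel_measurable N"
  using measurable_cong_sets by blast

lemma integrable_bounded_borel:
  fixes f :: "'a::topological_space \<Rightarrow> real"
  assumes "sets N = sets borel" "finite_measure N"
    and "f \<in> borel_measurable borel" "\<And>x. \<bar>f x\<bar> \<le> B"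
  shows "integrable N f"
  using assms borel_measurable_sets_borel[OF assms(1,3)]
  by (intro finite_measure.integrable_const_bound[where B = B]) auto

lemma integrable_C0:
  fixes f :: "'a::topological_space \<Rightarrow> real"
  assumes "compact (UNIV :: 'a set)" "f \<in> C0" "sets N = sets borel" "finite_measure N"
  shows "integrable N f"
  using assms C0_bounded[OF assms(1,2)] C0_borel_measurable integrable_bounded_borel by metis

section \<open>Finite combinations of Borel measures\<close>

lemma nn_integral_finite_combination:
  fixes M :: "'i \<Rightarrow> 'a::topological_space measure"
  assumes "sets \<nu> = sets borel" and sets_M: "\<And>i. i \<in> I \<Longrightarrow> sets (M i) = sets borel"
    and emeasure_\<nu>: "\<And>A. A \<in> sets borel \<Longrightarrow> emeasure \<nu> A = (\<Sum>i\<in>I. c i * emeasure (M i) A)"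
    and "u \<in> borel_measurable borel"
  shows "(\<integral>\<^sup>+x. u x \<partial>\<nu>) = (\<Sum>i\<in>I. c i * (\<integral>\<^sup>+x. u x \<partial>M i))"
  using \<open>u \<in> borel_measurable borel\<close>
proof (induction rule: borel_measurable_induct)
  case (cong f g)
  then show ?case by simp
next
  case (set A)
  then show ?case using assms by simp
next
  case (mult u c')
  then have "u \<in> borel_measurable \<nu>" "\<And>i. i \<in> I \<Longrightarrow> u \<in> borel_measurable (M i)"
    using assms by (auto intro: borel_measurable_sets_borel)
  then show ?case
    using mult by (simp add: nn_integral_cmult sum_distrib_left mult.left_commute)
next
  case (add u v)
  then have "u \<in> borel_measurable \<nu>" "v \<in> borel_measurable \<nu>"
    "\<And>i. i \<in> I \<Longrightarrow> u \<in> borel_measurable (M i)" "\<And>i. i \<in> I \<Longrightarrow> v \<in> borel_measurable (M i)"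
    using assms by (auto intro: borel_measurable_sets_borel)
  then show ?case
    using add by (simp add: nn_integral_add sum.distrib distrib_left)
next
  case (seq U)
  have meas: "\<And>n. U n \<in> borel_measurable \<nu>" "\<And>n i. i \<in> I \<Longrightarrow> U n \<in> borel_measurable (M i)"
    using seq(1) assms by (auto intro: borel_measurable_sets_borel)
  have mono: "\<And>i. incseq (\<lambda>n. c i * (\<integral>\<^sup>+x. U n x \<partial>M i))"
    using \<open>incseq U\<close> unfolding incseq_def le_fun_def
    by (auto intro!: mult_left_mono nn_integral_mono)
  have "(\<integral>\<^sup>+x. (SUP n. U n) x \<partial>\<nu>) = (SUP n. \<integral>\<^sup>+x. U n x \<partial>\<nu>)"
    using nn_integral_monotone_convergence_SUP[OF \<open>incseq U\<close> meas(1)] by (simp only: SUP_apply)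
  also have "\<dots> = (SUP n. \<Sum>i\<in>I. c i * (\<integral>\<^sup>+x. U n x \<partial>M i))"
    using seq.IH by simp
  also have "\<dots> = (\<Sum>i\<in>I. c i * (SUP n. \<integral>\<^sup>+x. U n x \<partial>M i))"
    using mono by (simp add: ennreal_SUP_sum SUP_mult_left_ennreal)
  also have "\<dots> = (\<Sum>i\<in>I. c i * (\<integral>\<^sup>+x. (SUP n. U n) x \<partial>M i))"
    by (intro sum.cong refl arg_cong2[where f = "(*)"])
       (simp only: SUP_apply nn_integral_monotone_convergence_SUP[OF \<open>incseq U\<close> meas(2)])
  finally show ?case .
qed

lemma finite_measure_finite_combination:
  fixes M :: "'i \<Rightarrow> 'a::topological_space measure"
  assumes "finite I" "sets \<nu> = sets borel"
    and "\<And>i. i \<in> I \<Longrightarrow> finite_measure (M i)" "\<And>i. i \<in> I \<Longrightarrow> sets (M i) = sets borel"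
    and "\<And>A. A \<in> sets borel \<Longrightarrow> emeasure \<nu> A = (\<Sum>i\<in>I. ennreal (c i) * emeasure (M i) A)"
  shows "finite_measure \<nu>"
proof (rule finite_measureI)
  have "\<forall>i\<in>I. emeasure (M i) UNIV < top"
    using assms(3) finite_measure.emeasure_finite top.not_eq_extremum by blast
  moreover have "space \<nu> = UNIV"
    using sets_eq_imp_space_eq[OF assms(2)] by simp
  ultimately show "emeasure \<nu> (space \<nu>) \<noteq> \<infinity>"
    using assms(1,5) by (simp add: ennreal_mult_less_top less_top)
qed

lemma integral_finite_combination_nonneg:
  fixes M :: "'i \<Rightarrow> 'a::topological_space measure" and g :: "'a \<Rightarrow> real"
  assumes "finite I" and sets_\<nu>: "sets \<nu> = sets borel"
    and fin_M: "\<And>i. i \<in> I \<Longrightarrow> finite_measure (M i)" and sets_M: "\<And>i. i \<in> I \<Longrightarrow> sets (M i) = sets borel"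
    and c: "\<And>i. i \<in> I \<Longrightarrow> c i \<ge> 0"
    and emeasure_\<nu>: "\<And>A. A \<in> sets borel \<Longrightarrow> emeasure \<nu> A = (\<Sum>i\<in>I. ennreal (c i) * emeasure (M i) A)"
    and g: "g \<in> borel_measurable borel" "\<And>x. 0 \<le> g x" "\<And>x. g x \<le> C"
  shows "(\<integral>x. g x \<partial>\<nu>) = (\<Sum>i\<in>I. c i * (\<integral>x. g x \<partial>M i))"
proof -
  have fin_\<nu>: "finite_measure \<nu>"
    by (rule finite_measure_finite_combination[OF assms(1-4,6)])
  have g_bound: "\<And>x. \<bar>g x\<bar> \<le> C"
    using g by (simp add: abs_of_nonneg)
  have int_nonneg: "\<And>i. 0 \<le> (\<integral>x. g x \<partial>M i)"
    using g by (simp add: integral_nonneg)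
  have "ennreal (\<integral>x. g x \<partial>\<nu>) = (\<integral>\<^sup>+x. g x \<partial>\<nu>)"
    using g integrable_bounded_borel[OF sets_\<nu> fin_\<nu> g(1) g_bound]
    by (simp add: nn_integral_eq_integral)
  also have "\<dots> = (\<Sum>i\<in>I. ennreal (c i) * (\<integral>\<^sup>+x. g x \<partial>M i))"
    using g(1) by (intro nn_integral_finite_combination[OF sets_\<nu> sets_M emeasure_\<nu>]) auto
  also have "\<dots> = (\<Sum>i\<in>I. ennreal (c i * (\<integral>x. g x \<partial>M i)))"
    using g integrable_bounded_borel[OF sets_M fin_M g(1) g_bound] c int_nonneg
    by (intro sum.cong refl) (simp add: nn_integral_eq_integral ennreal_mult)
  also have "\<dots> = ennreal (\<Sum>i\<in>I. c i * (\<integral>x. g x \<partial>M i))"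
    using c int_nonneg by (intro sum_ennreal) simp
  finally show ?thesis
    using c g int_nonneg by (subst (asm) ennreal_inj) (auto intro!: integral_nonneg sum_nonneg)
qed

lemma integral_finite_combination:
  fixes M :: "'i \<Rightarrow> 'a::topological_space measure" and f :: "'a \<Rightarrow> real"
  assumes "finite I" and sets_\<nu>: "sets \<nu> = sets borel"
    and fin_M: "\<And>i. i \<in> I \<Longrightarrow> finite_measure (M i)" and sets_M: "\<And>i. i \<in> I \<Longrightarrow> sets (M i) = sets borel"
    and c: "\<And>i. i \<in> I \<Longrightarrow> c i \<ge> 0"
    and emeasure_\<nu>: "\<And>A. A \<in> sets borel \<Longrightarrow> emeasure \<nu> A = (\<Sum>i\<in>I. ennreal (c i) * emeasure (M i) A)"
    and f: "f \<in> borel_measurable borel" "\<And>x. \<bar>f x\<bar> \<le> B"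
  shows "(\<integral>x. f x \<partial>\<nu>) = (\<Sum>i\<in>I. c i * (\<integral>x. f x \<partial>M i))"
proof -
  have B: "0 \<le> B" "0 \<le> f x + B" "f x + B \<le> 2 * B" for x
    using f(2)[of x] by (simp_all add: abs_le_iff)
  have shifted: "(\<integral>x. f x + B \<partial>N) = (\<integral>x. f x \<partial>N) + (\<integral>x. B \<partial>N)"
    if "sets N = sets borel" "finite_measure N" for N
    using that f integrable_bounded_borel finite_measure.integrable_const
    by (intro Bochner_Integration.integral_add) blast+
  have "(\<integral>x. f x + B \<partial>\<nu>) = (\<Sum>i\<in>I. c i * (\<integral>x. f x + B \<partial>M i))"
    using assms(1-6) B f(1)
    by (intro integral_finite_combination_nonneg[where C = "2 * B"]) auto
  moreover have "(\<integral>x. B \<partial>\<nu>) = (\<Sum>i\<in>I. c i * (\<integral>x. B \<partial>M i))"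
    using assms(1-6) B by (intro integral_finite_combination_nonneg[where C = B]) auto
  ultimately show ?thesis
    using shifted[OF sets_\<nu> finite_measure_finite_combination[OF assms(1-4,6)]] shifted[OF sets_M fin_M]
    by (simp add: distrib_left sum.distrib)
qed

lemma finite_combination_measure_exists:
  fixes M :: "'i \<Rightarrow> 'a::topological_space measure"
  assumes "finite I" and sets_M: "\<And>i. i \<in> I \<Longrightarrow> sets (M i) = sets borel"
  obtains \<nu> where "sets \<nu> = sets borel"
    "\<And>A. A \<in> sets borel \<Longrightarrow> emeasure \<nu> A = (\<Sum>i\<in>I. c i * emeasure (M i) A)"
proof -
  define \<mu> where "\<mu> A = (\<Sum>i\<in>I. c i * emeasure (M i) A)" for A
  have "countably_additive (sets borel) \<mu>"
    unfolding countably_additive_def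
  proof (intro allI impI)
    fix A :: "nat \<Rightarrow> 'a set"
    assume A: "range A \<subseteq> sets borel" "disjoint_family A"
    have "(\<Sum>n. \<mu> (A n)) = (\<Sum>i\<in>I. \<Sum>n. c i * emeasure (M i) (A n))"
      unfolding \<mu>_def by (rule suminf_sum) simp
    also have "\<dots> = \<mu> (\<Union>n. A n)"
      unfolding \<mu>_def using A sets_M by (intro sum.cong refl) (simp add: suminf_emeasure)
    finally show "(\<Sum>n. \<mu> (A n)) = \<mu> (\<Union> (range A))" .
  qed
  moreover have "positive (sets borel) \<mu>"
    by (simp add: positive_def \<mu>_def)
  ultimately have "\<And>A. A \<in> sets borel \<Longrightarrow> emeasure (measure_of UNIV (sets borel) \<mu>) A = \<mu> A"
    using emeasure_measure_of_sigma[of UNIV "sets borel"] sets.sigma_algebra_axioms[of borel] by simp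
  moreover have "sets (measure_of UNIV (sets borel) \<mu>) = sets borel"
    using sets.space_closed[of borel] sets.sigma_sets_eq[of borel] by (simp add: sets_measure_of)
  ultimately show thesis
    using that unfolding \<mu>_def by blast
qed

section \<open>Radon measures and the weak-* topology\<close>

lemma radon_measuresD:
  assumes "\<mu> \<in> radon_measures"
  shows "sets \<mu> = sets borel" "space \<mu> = UNIV" "finite_measure \<mu>" "measure \<mu> UNIV > 0"
proof -
  show sets: "sets \<mu> = sets borel" and fin: "finite_measure \<mu>"
    using assms by (simp_all add: radon_measures_def)
  show "space \<mu> = UNIV"
    using sets_eq_imp_space_eq[OF sets] by simp
  have "emeasure \<mu> UNIV \<noteq> 0"
    using assms by (simp add: radon_measures_def)
  then show "measure \<mu> UNIV > 0"
    using finite_measure.emeasure_eq_measure[OF fin, of UNIV]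
    by (metis ennreal_0 measure_nonneg order_le_less)
qed

lemma radon_measuresI:
  assumes "sets \<mu> = sets borel" "finite_measure \<mu>" "measure \<mu> UNIV > 0"
  shows "\<mu> \<in> radon_measures"
  using assms by (auto simp: radon_measures_def measure_def)

lemma integrable_C0_radon:
  fixes f :: "'a::topological_space \<Rightarrow> real"
  assumes "compact (UNIV :: 'a set)" "f \<in> C0" "\<mu> \<in> radon_measures"
  shows "integrable \<mu> f"
  using integrable_C0[OF assms(1,2) radon_measuresD(1,3)[OF assms(3)]] .

lemma integral_C0_finite_combination:
  fixes M :: "'i \<Rightarrow> 'a::topological_space measure" and f :: "'a \<Rightarrow> real"
  assumes "compact (UNIV :: 'a set)" "f \<in> C0" "finite I" "sets \<nu> = sets borel"
    and "\<And>i. i \<in> I \<Longrightarrow> M i \<in> radon_measures" "\<And>i. i \<in> I \<Longrightarrow> c i \<ge> 0"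
    and "\<And>A. A \<in> sets borel \<Longrightarrow> emeasure \<nu> A = (\<Sum>i\<in>I. ennreal (c i) * emeasure (M i) A)"
  shows "(\<integral>x. f x \<partial>\<nu>) = (\<Sum>i\<in>I. c i * (\<integral>x. f x \<partial>M i))"
proof -
  obtain B where "\<And>x. \<bar>f x\<bar> \<le> B"
    using C0_bounded[OF assms(1,2)] by blast
  then show ?thesis
    using assms(3,4,6,7) radon_measuresD(1,3)[OF assms(5)] C0_borel_measurable[OF assms(2)]
    by (intro integral_finite_combination[where B = B]) auto
qed

lemma integral_diff_const_radon:
  fixes f :: "'a::topological_space \<Rightarrow> real"
  assumes "compact (UNIV :: 'a set)" "f \<in> C0" "\<mu> \<in> radon_measures"
  shows "(\<integral>x. f x - c \<partial>\<mu>) = (\<integral>x. f x \<partial>\<mu>) - c * measure \<mu> UNIV"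
  using Bochner_Integration.integral_diff[OF integrable_C0_radon[OF assms]
      finite_measure.integrable_const[OF radon_measuresD(3)[OF assms(3)]]]
    radon_measuresD(2)[OF assms(3)]
  by (simp add: mult.commute)

lemma scale_measure_radon:
  assumes "\<mu> \<in> radon_measures" "l > 0"
  shows "scale_measure (ennreal l) \<mu> \<in> radon_measures"
  using assms radon_measuresD[OF assms(1)]
  by (intro radon_measuresI finite_measureI) (auto simp: finite_measure.emeasure_finite ennreal_mult_eq_top_iff)

lemma integral_C0_scale_measure:
  fixes f :: "'a::topological_space \<Rightarrow> real"
  assumes "compact (UNIV :: 'a set)" "f \<in> C0" "\<mu> \<in> radon_measures" "l \<ge> 0"
  shows "(\<integral>x. f x \<partial>scale_measure (ennreal l) \<mu>) = l * (\<integral>x. f x \<partial>\<mu>)"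
  using integral_C0_finite_combination[OF assms(1,2), where I = "{()}" and M = "\<lambda>_. \<mu>"
      and c = "\<lambda>_. l" and \<nu> = "scale_measure (ennreal l) \<mu>"] assms radon_measuresD(1)[OF assms(3)]
  by simp

lemma pos_cone_subset_radon:
  assumes "Y \<subseteq> radon_measures"
  shows "pos_cone Y \<subseteq> radon_measures"
  using assms scale_measure_radon unfolding pos_cone_def by blast

lemma topspace_weak_star_topology: "topspace weak_star_topology = radon_measures"
proof -
  have "radon_measures = {\<mu> \<in> radon_measures. (\<integral>x. 0 \<partial>\<mu>) \<in> (UNIV :: real set)}"
    by simp
  then have "radon_measures \<in> {{\<mu> \<in> radon_measures. (\<integral>x. f x \<partial>\<mu>) \<in> U} | f U. f \<in> C0 \<and> open U}"
    using C0_const open_UNIV by blast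
  then show ?thesis
    unfolding weak_star_topology_def topology_generated_by_topspace by blast
qed

lemma compactin_weak_star_subset_radon: "compactin weak_star_topology Y \<Longrightarrow> Y \<subseteq> radon_measures"
  using compactin_subset_topspace[of weak_star_topology Y] by (simp add: topspace_weak_star_topology)

lemma openin_weak_star_topology_integral:
  assumes "f \<in> C0" "open U"
  shows "openin weak_star_topology {\<mu> \<in> radon_measures. (\<integral>x. f x \<partial>\<mu>) \<in> U}"
  unfolding weak_star_topology_def using assms by (intro topology_generated_by_Basis) blast

lemma limitin_weak_star_topologyI:
  fixes \<nu> :: "nat \<Rightarrow> 'a::topological_space measure"
  assumes "\<mu> \<in> radon_measures" and "eventually (\<lambda>k. \<nu> k \<in> radon_measures) sequentially"
    and "\<And>f. f \<in> C0 \<Longrightarrow> (\<lambda>k. \<integral>x. f x \<partial>\<nu> k) \<longlonglongrightarrow> (\<integral>x. f x \<partial>\<mu>)"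
  shows "limitin weak_star_topology \<nu> \<mu> sequentially"
proof -
  have "eventually (\<lambda>k. \<nu> k \<in> T) sequentially" if "openin weak_star_topology T" "\<mu> \<in> T" for T
  proof -
    have "generate_topology_on
        {{\<mu> \<in> radon_measures. (\<integral>x. f x \<partial>\<mu>) \<in> U} | f U. f \<in> C0 \<and> open U} T"
      using that(1) unfolding weak_star_topology_def by (rule openin_topology_generated_by)
    then show ?thesis
      using that(2)
    proof (induction rule: generate_topology_on.induct)
      case (Int A B)
      then show ?case by (auto elim: eventually_elim2)
    next
      case (UN K)
      then obtain A where A: "A \<in> K" "\<mu> \<in> A"
        by blast
      then have "eventually (\<lambda>k. \<nu> k \<in> A) sequentially"
        using UN.IH by blast
      then show ?case
        by (rule eventually_mono) (use A in blast)
    next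
      case (Basis S)
      then obtain f U where S: "S = {\<mu> \<in> radon_measures. (\<integral>x. f x \<partial>\<mu>) \<in> U}" "f \<in> C0" "open U"
        by blast
      moreover have "(\<integral>x. f x \<partial>\<mu>) \<in> U"
        using Basis.prems S(1) by blast
      ultimately have "eventually (\<lambda>k. (\<integral>x. f x \<partial>\<nu> k) \<in> U) sequentially"
        using topological_tendstoD[OF assms(3)] by blast
      then show ?case
        using assms(2) unfolding S(1) by (auto elim: eventually_elim2)
    qed simp
  qed
  then show ?thesis
    unfolding limitin_def topspace_weak_star_topology using assms(1) by blast
qed

lemma in_closure_of_limitin:
  assumes "limitin X f l F" "F \<noteq> bot" "eventually (\<lambda>k. f k \<in> S) F"
  shows "l \<in> X closure_of S"
  unfolding in_closure_of
proof (intro conjI allI impI)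
  show "l \<in> topspace X"
    using assms(1) by (simp add: limitin_def)
  fix T
  assume "l \<in> T \<and> openin X T"
  then have "eventually (\<lambda>k. f k \<in> S \<and> f k \<in> T) F"
    using assms(1,3) by (auto simp: limitin_def elim: eventually_elim2)
  then show "\<exists>y. y \<in> S \<and> y \<in> T"
    using assms(2) eventually_happens' by blast
qed

lemma integral_meas_convex_hull_pos_cone_nonneg:
  fixes f :: "'a::topological_space \<Rightarrow> real"
  assumes "compact (UNIV :: 'a set)" "f \<in> C0" "Y \<subseteq> radon_measures"
    and nonneg: "\<And>\<mu>. \<mu> \<in> Y \<Longrightarrow> (\<integral>x. f x \<partial>\<mu>) \<ge> 0"
    and "\<nu> \<in> meas_convex_hull (pos_cone Y)"
  shows "(\<integral>x. f x \<partial>\<nu>) \<ge> 0"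
proof -
  obtain I :: "nat set" and c M where hull: "finite I" "\<forall>i\<in>I. c i \<ge> 0 \<and> M i \<in> pos_cone Y"
    "sets \<nu> = sets borel" "\<forall>A\<in>sets borel. emeasure \<nu> A = (\<Sum>i\<in>I. ennreal (c i) * emeasure (M i) A)"
    using assms(5) unfolding meas_convex_hull_def by blast
  have "(\<integral>x. f x \<partial>M i) \<ge> 0" if i: "i \<in> I" for i
  proof -
    obtain l \<mu> where "M i = scale_measure (ennreal l) \<mu>" "l > 0" "\<mu> \<in> Y"
      using hull(2) i unfolding pos_cone_def by blast
    then show ?thesis
      using integral_C0_scale_measure[OF assms(1,2)] nonneg assms(3) by auto
  qed
  moreover have "(\<integral>x. f x \<partial>\<nu>) = (\<Sum>i\<in>I. c i * (\<integral>x. f x \<partial>M i))"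
  proof (rule integral_C0_finite_combination[OF assms(1,2) hull(1,3)])
    show "\<And>i. i \<in> I \<Longrightarrow> M i \<in> radon_measures" "\<And>i. i \<in> I \<Longrightarrow> 0 \<le> c i"
      using hull(2) pos_cone_subset_radon[OF assms(3)] by blast+
  qed (use hull(4) in blast)
  moreover have "\<And>i. i \<in> I \<Longrightarrow> c i \<ge> 0"
    using hull(2) by blast
  ultimately show ?thesis
    by (simp add: sum_nonneg)
qed

lemma meas_convex_hull_average:
  assumes "k \<ge> 1" "\<And>i. i \<in> {1..k} \<Longrightarrow> M i \<in> S" "\<And>i. i \<in> {1..k} \<Longrightarrow> sets (M i) = sets borel"
  obtains \<nu> where "\<nu> \<in> meas_convex_hull S" "sets \<nu> = sets borel"
    "\<And>A. A \<in> sets borel \<Longrightarrow> emeasure \<nu> A = (\<Sum>i=1..k. ennreal (1 / real k) * emeasure (M i) A)"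
proof -
  obtain \<nu> where \<nu>: "sets \<nu> = sets borel"
    "\<And>A. A \<in> sets borel \<Longrightarrow> emeasure \<nu> A = (\<Sum>i=1..k. ennreal (1 / real k) * emeasure (M i) A)"
    by (rule finite_combination_measure_exists[of "{1..k}" M "\<lambda>_. ennreal (1 / real k)"]) (use assms(3) in auto)
  moreover have "\<nu> \<in> meas_convex_hull S"
    unfolding meas_convex_hull_def
  proof (intro CollectI exI conjI ballI)
    show "finite {1..k}" "{1..k} \<noteq> {}" "(\<Sum>i\<in>{1..k}. 1 / real k) = 1"
      using assms(1) by auto
  qed (use assms(2) \<nu> in auto)
  ultimately show thesis
    using that by blast
qed

definition normalized_integral :: "'a::topological_space measure \<Rightarrow> ('a \<Rightarrow> real) \<Rightarrow> real" where
  "normalized_integral \<mu> f = (1 / measure \<mu> UNIV) * (\<integral>x. f x \<partial>\<mu>)"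

lemma normalized_integral_const:
  "\<mu> \<in> radon_measures \<Longrightarrow> normalized_integral \<mu> (\<lambda>x. c) = c"
  using radon_measuresD[of \<mu>] by (simp add: normalized_integral_def)

lemma normalized_integral_diff:
  fixes f g :: "'a::topological_space \<Rightarrow> real"
  assumes "compact (UNIV :: 'a set)" "f \<in> C0" "g \<in> C0" "\<mu> \<in> radon_measures"
  shows "normalized_integral \<mu> (\<lambda>x. f x - g x) = normalized_integral \<mu> f - normalized_integral \<mu> g"
  using integrable_C0_radon[OF assms(1,2,4)] integrable_C0_radon[OF assms(1,3,4)]
  by (simp add: normalized_integral_def right_diff_distrib)

lemma normalized_integral_cmult:
  "normalized_integral \<mu> (\<lambda>x. c * f x) = c * normalized_integral \<mu> f"
  by (simp add: normalized_integral_def)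

lemma normalized_integral_sum:
  fixes h :: "'i \<Rightarrow> 'a::topological_space \<Rightarrow> real"
  assumes "compact (UNIV :: 'a set)" "\<And>l. l \<in> L \<Longrightarrow> h l \<in> C0" "\<mu> \<in> radon_measures"
  shows "normalized_integral \<mu> (\<lambda>x. \<Sum>l\<in>L. h l x) = (\<Sum>l\<in>L. normalized_integral \<mu> (h l))"
  using integrable_C0_radon[OF assms(1) assms(2) assms(3)]
  by (simp add: normalized_integral_def sum_distrib_left)

lemma normalized_integral_abs_le:
  fixes f :: "'a::topological_space \<Rightarrow> real"
  assumes "\<mu> \<in> radon_measures" "\<And>x. \<bar>f x\<bar> \<le> b"
  shows "\<bar>normalized_integral \<mu> f\<bar> \<le> b"
proof -
  have "\<bar>\<integral>x. f x \<partial>\<mu>\<bar> \<le> (\<integral>x. \<bar>f x\<bar> \<partial>\<mu>)"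
    by (rule integral_abs_bound)
  also have "\<dots> \<le> (\<integral>x. b \<partial>\<mu>)"
    using assms(2) abs_ge_zero order_trans finite_measure.integrable_const[OF radon_measuresD(3)[OF assms(1)]]
    by (intro integral_mono') blast+
  also have "\<dots> = b * measure \<mu> UNIV"
    using radon_measuresD(2)[OF assms(1)] by simp
  finally have "\<bar>\<integral>x. f x \<partial>\<mu>\<bar> \<le> b * measure \<mu> UNIV" .
  then show ?thesis
    using radon_measuresD(4)[OF assms(1)]
    by (simp add: normalized_integral_def abs_mult divide_le_eq)
qed

section \<open>A countable uniformly dense subset of \<open>C(X)\<close>\<close>

lemma C0_separates_points:
  fixes x y :: "'a::t2_space"
  assumes "compact (UNIV :: 'a set)" "x \<noteq> y"
  shows "\<exists>f\<in>C0. f x \<noteq> f y"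
proof -
  have "compact_space (euclidean :: 'a topology)"
    using assms(1) by (simp add: compact_space_def)
  moreover have "Hausdorff_space (euclidean :: 'a topology)"
    unfolding Hausdorff_space_def disjnt_def using hausdorff by auto
  ultimately have "normal_space (euclidean :: 'a topology)"
    using compact_Hausdorff_or_regular_imp_normal_space by blast
  moreover have "closedin euclidean {x}" "closedin euclidean {y}" "disjnt {x} {y}"
    using assms(2) by (simp_all flip: closed_closedin)
  ultimately obtain f where "continuous_map euclidean euclideanreal f" "f ` {x} \<subseteq> {0}" "f ` {y} \<subseteq> {1}"
    using Urysohn_lemma_alt[of euclidean "{x}" "{y}" 0 1] by blast
  then show ?thesis
    by (auto simp: C0_def)
qed

text \<open>Each separating function separates an open set of pairs off the diagonal of \<open>X \<times> X\<close>;
  the Lindelof property of \<open>X \<times> X\<close> lets countably many of them suffice.\<close>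
lemma countable_separating_C0:
  assumes "compact (UNIV :: 'a set)"
  obtains G :: "('a::{t2_space,second_countable_topology} \<Rightarrow> real) set"
  where "countable G" "G \<subseteq> C0" "\<And>x y. x \<noteq> y \<Longrightarrow> \<exists>g\<in>G. g x \<noteq> g y"
proof -
  define sep where "sep = (\<lambda>(x :: 'a, y). SOME f. f \<in> C0 \<and> f x \<noteq> f y)"
  have sep: "sep (x, y) \<in> C0 \<and> sep (x, y) x \<noteq> sep (x, y) y" if "x \<noteq> y" for x y :: 'a
    unfolding sep_def using someI_ex[OF C0_separates_points[OF assms that, unfolded Bex_def]] by simp
  define Q where "Q = {(x :: 'a, y). x \<noteq> y}"
  define Op where "Op q = {p :: 'a \<times> 'a. sep q (fst p) \<noteq> sep q (snd p)}" for q
  have open_Op: "open (Op q)" if "q \<in> Q" for q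
  proof -
    have "continuous_on UNIV (sep q)"
      using sep that by (auto simp: Q_def C0_def)
    then have "continuous_on UNIV (\<lambda>p :: 'a \<times> 'a. sep q (fst p))" "continuous_on UNIV (\<lambda>p :: 'a \<times> 'a. sep q (snd p))"
      by (auto intro!: continuous_on_compose2[of UNIV "sep q"] continuous_intros)
    then show ?thesis
      unfolding Op_def by (rule open_Collect_neq)
  qed
  obtain F where F: "F \<subseteq> Op ` Q" "countable F" "\<Union>F = \<Union>(Op ` Q)"
    using Lindelof[of "Op ` Q"] open_Op by blast
  then obtain Q' where Q': "countable Q'" "Q' \<subseteq> Q" "F = Op ` Q'"
    using countable_subset_image[of F Op Q] by blast
  show thesis
  proof (rule that[of "sep ` Q'"])
    show "countable (sep ` Q')" "sep ` Q' \<subseteq> C0"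
      using Q' sep by (auto simp: Q_def)
    fix x y :: 'a
    assume "x \<noteq> y"
    then have "(x, y) \<in> Op (x, y)" "(x, y) \<in> Q"
      using sep by (simp_all add: Op_def Q_def)
    then have "(x, y) \<in> \<Union>F"
      using F(3) by blast
    then obtain q where "q \<in> Q'" "(x, y) \<in> Op q"
      using Q'(3) by blast
    then show "\<exists>g\<in>sep ` Q'. g x \<noteq> g y"
      unfolding Op_def by auto
  qed
qed

text \<open>The \<open>\<rat>\<close>-algebra generated by \<open>G\<close> is built in stages, so that its countability follows
  by induction on the stage.\<close>
primrec rat_algebra_level :: "('a \<Rightarrow> real) set \<Rightarrow> nat \<Rightarrow> ('a \<Rightarrow> real) set" where
  "rat_algebra_level G 0 = G \<union> range (\<lambda>q. \<lambda>x. real_of_rat q)"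
| "rat_algebra_level G (Suc n) = rat_algebra_level G n
      \<union> (\<lambda>(f, g). \<lambda>x. f x + g x) ` (rat_algebra_level G n \<times> rat_algebra_level G n)
      \<union> (\<lambda>(f, g). \<lambda>x. f x * g x) ` (rat_algebra_level G n \<times> rat_algebra_level G n)"

definition rat_algebra :: "('a \<Rightarrow> real) set \<Rightarrow> ('a \<Rightarrow> real) set" where
  "rat_algebra G = (\<Union>n. rat_algebra_level G n)"

lemma countable_rat_algebra: "countable G \<Longrightarrow> countable (rat_algebra G)"
proof -
  assume "countable G"
  then have "countable (rat_algebra_level G n)" for n
    by (induction n) auto
  then show ?thesis
    by (simp add: rat_algebra_def)
qed

lemma rat_algebra_subset_C0: "G \<subseteq> C0 \<Longrightarrow> rat_algebra G \<subseteq> C0"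
proof -
  assume "G \<subseteq> C0"
  then have "rat_algebra_level G n \<subseteq> C0" for n
    by (induction n) (auto simp: C0_def intro!: continuous_intros)
  then show ?thesis
    by (auto simp: rat_algebra_def)
qed

lemma rat_algebra_generators: "G \<subseteq> rat_algebra G" "(\<lambda>x. real_of_rat q) \<in> rat_algebra G"
  unfolding rat_algebra_def by (auto intro!: exI[of _ 0])

lemma rat_algebra_add_mult:
  assumes "f \<in> rat_algebra G" "g \<in> rat_algebra G"
  shows "(\<lambda>x. f x + g x) \<in> rat_algebra G" "(\<lambda>x. f x * g x) \<in> rat_algebra G"
proof -
  have mono: "mono (rat_algebra_level G)"
    by (rule incseq_SucI) auto
  obtain m n where "f \<in> rat_algebra_level G m" "g \<in> rat_algebra_level G n"
    using assms by (auto simp: rat_algebra_def)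
  then have "f \<in> rat_algebra_level G (max m n)" "g \<in> rat_algebra_level G (max m n)"
    using monoD[OF mono, of m "max m n"] monoD[OF mono, of n "max m n"] by auto
  then have "(\<lambda>x. f x + g x) \<in> rat_algebra_level G (Suc (max m n))"
    "(\<lambda>x. f x * g x) \<in> rat_algebra_level G (Suc (max m n))"
    by (auto intro!: image_eqI[where x = "(f, g)"])
  then show "(\<lambda>x. f x + g x) \<in> rat_algebra G" "(\<lambda>x. f x * g x) \<in> rat_algebra G"
    unfolding rat_algebra_def by blast+
qed

lemma abs_mult_approx:
  fixes a b a' b' :: real
  assumes "\<bar>a\<bar> \<le> A" "\<bar>b\<bar> \<le> B" "\<bar>a - a'\<bar> \<le> d" "\<bar>b - b'\<bar> \<le> d" "d \<le> 1"
  shows "\<bar>a * b - a' * b'\<bar> \<le> (A + B + 1) * d"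
proof -
  have "a * b - a' * b' = a * (b - b') + b' * (a - a')"
    by (simp add: algebra_simps)
  also have "\<bar>\<dots>\<bar> \<le> \<bar>a\<bar> * \<bar>b - b'\<bar> + \<bar>b'\<bar> * \<bar>a - a'\<bar>"
    by (metis abs_mult abs_triangle_ineq)
  also have "\<dots> \<le> A * d + (B + 1) * d"
    using assms by (intro add_mono mult_mono) auto
  finally show ?thesis
    by (simp add: algebra_simps)
qed

definition uniformly_approximable :: "('a \<Rightarrow> real) set \<Rightarrow> ('a \<Rightarrow> real) \<Rightarrow> bool" where
  "uniformly_approximable A f \<longleftrightarrow> (\<forall>e>0. \<exists>d\<in>A. \<forall>x. \<bar>f x - d x\<bar> < e)"

lemma uniformly_approximable_add:
  assumes "\<And>f g. f \<in> A \<Longrightarrow> g \<in> A \<Longrightarrow> (\<lambda>x. f x + g x) \<in> A"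
    and "uniformly_approximable A f" "uniformly_approximable A g"
  shows "uniformly_approximable A (\<lambda>x. f x + g x)"
  unfolding uniformly_approximable_def
proof (intro allI impI)
  fix e :: real
  assume "e > 0"
  then obtain d1 d2 where d: "d1 \<in> A" "\<And>x. \<bar>f x - d1 x\<bar> < e / 2" "d2 \<in> A" "\<And>x. \<bar>g x - d2 x\<bar> < e / 2"
    using assms(2,3) half_gt_zero unfolding uniformly_approximable_def by metis
  then have "\<bar>f x + g x - (d1 x + d2 x)\<bar> < e" for x
    using d(2)[of x] d(4)[of x] by linarith
  then show "\<exists>d\<in>A. \<forall>x. \<bar>f x + g x - d x\<bar> < e"
    using assms(1)[OF d(1,3)] by (intro bexI[of _ "\<lambda>x. d1 x + d2 x"]) auto
qed

lemma uniformly_approximable_mult: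
  assumes "\<And>f g. f \<in> A \<Longrightarrow> g \<in> A \<Longrightarrow> (\<lambda>x. f x * g x) \<in> A"
    and "uniformly_approximable A f" "uniformly_approximable A g"
    and Bf: "\<And>x. \<bar>f x\<bar> \<le> Bf" and Bg: "\<And>x. \<bar>g x\<bar> \<le> Bg"
  shows "uniformly_approximable A (\<lambda>x. f x * g x)"
  unfolding uniformly_approximable_def
proof (intro allI impI)
  fix e :: real
  assume "e > 0"
  have "Bf \<ge> 0" "Bg \<ge> 0"
    using Bf Bg abs_ge_zero order_trans by blast+
  define \<delta> where "\<delta> = min 1 (e / (Bf + Bg + 2))"
  have \<delta>: "\<delta> > 0" "\<delta> \<le> 1" "(Bf + Bg + 1) * \<delta> < e"
  proof -
    show "\<delta> > 0" "\<delta> \<le> 1"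
      using \<open>e > 0\<close> \<open>Bf \<ge> 0\<close> \<open>Bg \<ge> 0\<close> by (auto simp: \<delta>_def)
    have "(Bf + Bg + 1) * \<delta> \<le> (Bf + Bg + 1) * (e / (Bf + Bg + 2))"
      using \<open>Bf \<ge> 0\<close> \<open>Bg \<ge> 0\<close> by (intro mult_left_mono) (auto simp: \<delta>_def)
    also have "\<dots> < e"
      using \<open>e > 0\<close> \<open>Bf \<ge> 0\<close> \<open>Bg \<ge> 0\<close> by (simp add: field_simps)
    finally show "(Bf + Bg + 1) * \<delta> < e" .
  qed
  obtain d1 d2 where d: "d1 \<in> A" "\<And>x. \<bar>f x - d1 x\<bar> < \<delta>" "d2 \<in> A" "\<And>x. \<bar>g x - d2 x\<bar> < \<delta>"
    using assms(2,3) \<delta>(1) unfolding uniformly_approximable_def by metis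
  have "\<bar>f x * g x - d1 x * d2 x\<bar> < e" for x
    using abs_mult_approx[OF Bf Bg less_imp_le[OF d(2)] less_imp_le[OF d(4)] \<delta>(2), of x x] \<delta>(3)
    by linarith
  then show "\<exists>d\<in>A. \<forall>x. \<bar>f x * g x - d x\<bar> < e"
    using assms(1)[OF d(1,3)] by (intro bexI[of _ "\<lambda>x. d1 x * d2 x"]) auto
qed

lemma uniformly_approximable_const:
  assumes "\<And>q. (\<lambda>x. real_of_rat q) \<in> A"
  shows "uniformly_approximable A (\<lambda>x. c)"
  unfolding uniformly_approximable_def
proof (intro allI impI)
  fix e :: real
  assume "e > 0"
  then obtain r where "r \<in> \<rat>" "\<bar>c - r\<bar> < e"
    using Rats_dense_in_real[of "c - e" "c + e"] by (auto simp: abs_less_iff)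
  then show "\<exists>d\<in>A. \<forall>x. \<bar>c - d x\<bar> < e"
    using assms by (metis Rats_cases)
qed

lemma uniformly_approximable_trans:
  assumes "uniformly_approximable B f" "\<And>g. g \<in> B \<Longrightarrow> uniformly_approximable A g"
  shows "uniformly_approximable A f"
  unfolding uniformly_approximable_def
proof (intro allI impI)
  fix e :: real
  assume "e > 0"
  then obtain g where g: "g \<in> B" "\<And>x. \<bar>f x - g x\<bar> < e / 2"
    using assms(1) half_gt_zero unfolding uniformly_approximable_def by metis
  then obtain d where d: "d \<in> A" "\<And>x. \<bar>g x - d x\<bar> < e / 2"
    using assms(2) \<open>e > 0\<close> half_gt_zero unfolding uniformly_approximable_def by metis
  have "\<bar>f x - d x\<bar> < e" for x
    using g(2)[of x] d(2)[of x] by linarith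
  then show "\<exists>d\<in>A. \<forall>x. \<bar>f x - d x\<bar> < e"
    using d(1) by blast
qed

lemma uniformly_approximable_rational_subalgebra:
  fixes A :: "('a::t2_space \<Rightarrow> real) set"
  assumes cpt: "compact (UNIV :: 'a set)" and "A \<subseteq> C0"
    and add: "\<And>f g. f \<in> A \<Longrightarrow> g \<in> A \<Longrightarrow> (\<lambda>x. f x + g x) \<in> A"
    and mult: "\<And>f g. f \<in> A \<Longrightarrow> g \<in> A \<Longrightarrow> (\<lambda>x. f x * g x) \<in> A"
    and const: "\<And>q. (\<lambda>x. real_of_rat q) \<in> A"
    and separating: "\<And>x y. x \<noteq> y \<Longrightarrow> \<exists>f\<in>A. f x \<noteq> f y"
    and "f \<in> C0"
  shows "uniformly_approximable A f"
proof -
  define R where "R = {f. continuous_on UNIV f \<and> uniformly_approximable A f}"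
  interpret function_ring_on R UNIV
  proof
    fix f g
    assume f: "f \<in> R" and g: "g \<in> R"
    then have "f \<in> C0" "g \<in> C0"
      by (simp_all add: R_def C0_def)
    then obtain Bf Bg where "\<And>x. \<bar>f x\<bar> \<le> Bf" "\<And>x. \<bar>g x\<bar> \<le> Bg"
      using C0_bounded[OF cpt] by metis
    then have "uniformly_approximable A (\<lambda>x. f x * g x)"
      using f g by (intro uniformly_approximable_mult[OF mult]) (simp_all add: R_def)
    then show "(\<lambda>x. f x * g x) \<in> R"
      using f g by (auto simp: R_def intro!: continuous_intros)
    have "uniformly_approximable A (\<lambda>x. f x + g x)"
      using f g by (intro uniformly_approximable_add[OF add]) (simp_all add: R_def)
    then show "(\<lambda>x. f x + g x) \<in> R"
      using f g by (auto simp: R_def intro!: continuous_intros)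
  next
    fix x y :: 'a
    assume "x \<noteq> y"
    moreover have "d \<in> R" if "d \<in> A" for d
      unfolding R_def uniformly_approximable_def
      using that \<open>A \<subseteq> C0\<close> by (auto simp: C0_def intro!: bexI[of _ d])
    ultimately show "\<exists>f\<in>R. f x \<noteq> f y"
      using separating by blast
  next
    show "(\<lambda>_. c) \<in> R" for c
      using uniformly_approximable_const[OF const] by (simp add: R_def)
  qed (use cpt in \<open>simp_all add: R_def\<close>)
  have "uniformly_approximable R f"
    using Stone_Weierstrass_basic \<open>f \<in> C0\<close> unfolding uniformly_approximable_def C0_def by blast
  then show ?thesis
    by (rule uniformly_approximable_trans) (simp add: R_def)
qed

lemma countable_uniformly_dense_C0:
  assumes "compact (UNIV :: 'a set)"
  obtains D :: "nat \<Rightarrow> 'a::{t2_space,second_countable_topology} \<Rightarrow> real"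
  where "\<And>j. D j \<in> C0" "\<And>f. f \<in> C0 \<Longrightarrow> uniformly_approximable (range D) f"
proof -
  obtain G :: "('a \<Rightarrow> real) set" where G: "countable G" "G \<subseteq> C0" "\<And>x y. x \<noteq> y \<Longrightarrow> \<exists>g\<in>G. g x \<noteq> g y"
    using countable_separating_C0[OF assms] by blast
  have ne: "rat_algebra G \<noteq> {}"
    using rat_algebra_generators(2) by blast
  have range: "range (from_nat_into (rat_algebra G)) = rat_algebra G"
    by (rule range_from_nat_into[OF ne countable_rat_algebra[OF G(1)]])
  have separating: "\<And>x y. x \<noteq> y \<Longrightarrow> \<exists>g\<in>rat_algebra G. g x \<noteq> g y"
    using G(3) rat_algebra_generators(1) by blast
  show thesis
  proof (rule that[of "from_nat_into (rat_algebra G)"])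
    show "from_nat_into (rat_algebra G) j \<in> C0" for j
      using from_nat_into[OF ne] rat_algebra_subset_C0[OF G(2)] by blast
    show "uniformly_approximable (range (from_nat_into (rat_algebra G))) f" if "f \<in> C0" for f
      unfolding range
      by (rule uniformly_approximable_rational_subalgebra[OF assms rat_algebra_subset_C0[OF G(2)]
          rat_algebra_add_mult(1) rat_algebra_add_mult(2) rat_algebra_generators(2) separating that])
  qed
qed

section \<open>Herding\<close>

lemma sum_power_half_le_2: "(\<Sum>j<k. (1 / 2 :: real) ^ j) \<le> 2"
proof -
  have "(\<Sum>j<k. (1 / 2 :: real) ^ j) = 2 - 2 * (1 / 2) ^ k"
    by (induction k) (auto simp: field_simps)
  then show ?thesis
    by simp
qed

lemma Suc_mult_power_half_le_1: "real (Suc k) * (1 / 2) ^ k \<le> 1"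
proof -
  have "Suc k \<le> 2 ^ k"
    using less_exp[of k] by (simp add: Suc_le_eq)
  then have "real (Suc k) \<le> 2 ^ k"
    by (metis of_nat_le_iff of_nat_numeral of_nat_power)
  then show ?thesis
    by (simp add: field_simps)
qed

lemma LIMSEQ_zero_of_square_le:
  fixes x :: "nat \<Rightarrow> real"
  assumes "eventually (\<lambda>k. (x k)\<^sup>2 \<le> C / real k) sequentially"
  shows "x \<longlonglongrightarrow> 0"
proof (rule Lim_null_comparison)
  show "eventually (\<lambda>k. norm (x k) \<le> sqrt (C / real k)) sequentially"
    using assms by eventually_elim (metis power2_abs real_le_rsqrt real_norm_def)
  show "(\<lambda>k. sqrt (C / real k)) \<longlonglongrightarrow> 0"
    using tendsto_real_sqrt[OF lim_const_over_n[of C]] by simp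
qed

text \<open>The herding inequality says that the cross term vanishes to first order, so the squared
  length of the discrepancy vector grows by at most a constant per step.\<close>
lemma herding_potential_step:
  fixes v :: "nat \<Rightarrow> nat \<Rightarrow> real"
  assumes bound: "\<And>i j. \<bar>v i j\<bar> \<le> (1 / 2) ^ j"
    and herding: "(\<Sum>l<k. (\<Sum>i=1..k. v i l) * v (Suc k) l) \<le> 0"
  shows "(\<Sum>j<Suc k. (\<Sum>i=1..Suc k. v i j)\<^sup>2) \<le> (\<Sum>j<k. (\<Sum>i=1..k. v i j)\<^sup>2) + 3"
proof -
  define S where "S k j = (\<Sum>i=1..k. v i j)" for k j
  have S_Suc: "S (Suc k) j = S k j + v (Suc k) j" for j
    by (simp add: S_def)
  have "(\<Sum>j<k. (S (Suc k) j)\<^sup>2)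
      = (\<Sum>j<k. (S k j)\<^sup>2) + 2 * (\<Sum>l<k. S k l * v (Suc k) l) + (\<Sum>j<k. (v (Suc k) j)\<^sup>2)"
    unfolding S_Suc power2_sum by (simp add: sum.distrib sum_distrib_left mult.assoc)
  moreover have "(\<Sum>j<k. (v (Suc k) j)\<^sup>2) \<le> 2"
  proof -
    have "\<bar>v (Suc k) j\<bar> * \<bar>v (Suc k) j\<bar> \<le> (1 / 2) ^ j * 1" for j
      using bound[of "Suc k" j] order_trans[OF bound power_le_one[of "1 / 2 :: real" j]]
      by (intro mult_mono) auto
    then have "(\<Sum>j<k. (v (Suc k) j)\<^sup>2) \<le> (\<Sum>j<k. (1 / 2) ^ j)"
      by (intro sum_mono) (simp add: power2_eq_square abs_mult[symmetric])
    then show ?thesis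
      using sum_power_half_le_2[of k] by linarith
  qed
  moreover have "(S (Suc k) k)\<^sup>2 \<le> 1"
  proof -
    have "\<bar>S (Suc k) k\<bar> \<le> real (card {1..Suc k}) * (1 / 2) ^ k"
      unfolding S_def using bound by (intro order_trans[OF sum_abs sum_bounded_above]) auto
    then show ?thesis
      using Suc_mult_power_half_le_1[of k] by (simp add: abs_square_le_1)
  qed
  ultimately show ?thesis
    using herding unfolding S_def by simp
qed

lemma herding_averages_vanish:
  fixes v :: "nat \<Rightarrow> nat \<Rightarrow> real"
  assumes bound: "\<And>i j. \<bar>v i j\<bar> \<le> (1 / 2) ^ j"
    and herding: "\<And>k. (\<Sum>l<k. (\<Sum>i=1..k. v i l) * v (Suc k) l) \<le> 0"
  shows "(\<lambda>k. (\<Sum>i=1..k. v i j) / real k) \<longlonglongrightarrow> 0"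
proof (rule LIMSEQ_zero_of_square_le)
  define T where "T k = (\<Sum>j<k. (\<Sum>i=1..k. v i j)\<^sup>2)" for k
  have T_bound: "T k \<le> 3 * real k" for k
  proof (induction k)
    case (Suc k)
    then show ?case
      using herding_potential_step[OF bound herding, of k] by (simp add: T_def)
  qed (simp add: T_def)
  have "((\<Sum>i=1..k. v i j) / real k)\<^sup>2 \<le> 3 / real k" if "j < k" for k
  proof -
    have "(\<Sum>i=1..k. v i j)\<^sup>2 \<le> 3 * real k"
      using member_le_sum[of j "{..<k}" "\<lambda>j. (\<Sum>i=1..k. v i j)\<^sup>2"] that T_bound[of k]
      by (simp add: T_def)
    then have "(\<Sum>i=1..k. v i j)\<^sup>2 / real k / real k \<le> 3 * real k / real k / real k"
      by (intro divide_right_mono) auto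
    then show ?thesis
      using that by (simp add: power_divide power2_eq_square)
  qed
  then show "eventually (\<lambda>k. ((\<Sum>i=1..k. v i j) / real k)\<^sup>2 \<le> 3 / real k) sequentially"
    using eventually_gt_at_top[of j] by (rule eventually_mono[rotated])
qed

lemma LIMSEQ_by_uniform_approximation:
  fixes f :: "nat \<Rightarrow> real"
  assumes "\<And>e. e > 0 \<Longrightarrow> \<exists>g l. g \<longlonglongrightarrow> l \<and> (\<forall>n. \<bar>f n - g n\<bar> \<le> e) \<and> \<bar>L - l\<bar> \<le> e"
  shows "f \<longlonglongrightarrow> L"
proof (rule LIMSEQ_I)
  fix r :: real
  assume "r > 0"
  then obtain g l where g: "g \<longlonglongrightarrow> l" "\<And>n. \<bar>f n - g n\<bar> \<le> r / 4" "\<bar>L - l\<bar> \<le> r / 4"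
    using assms[of "r / 4"] by auto
  obtain N where N: "\<And>n. n \<ge> N \<Longrightarrow> norm (g n - l) < r / 4"
    using LIMSEQ_D[OF g(1), of "r / 4"] \<open>r > 0\<close> by auto
  have "norm (f n - L) < r" if "n \<ge> N" for n
    using g(2)[of n] g(3) N[OF that] by (simp only: real_norm_def)
  then show "\<exists>N. \<forall>n\<ge>N. norm (f n - L) < r"
    by blast
qed

lemma abs_cesaro_mean_le:
  fixes x :: "nat \<Rightarrow> real"
  assumes "\<And>i. \<bar>x i\<bar> \<le> e"
  shows "\<bar>(1 / real n) * (\<Sum>i=1..n. x i)\<bar> \<le> e"
proof (cases "n = 0")
  case True
  then show ?thesis
    using assms[of 0] by simp
next
  case False
  have "\<bar>\<Sum>i=1..n. x i\<bar> \<le> (\<Sum>i=1..n. \<bar>x i\<bar>)"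
    by (rule sum_abs)
  also have "\<dots> \<le> real n * e"
    using sum_bounded_above[of "{1..n}" "\<lambda>i. \<bar>x i\<bar>" e] assms by simp
  finally have "\<bar>\<Sum>i=1..n. x i\<bar> \<le> real n * e" .
  then have "1 / real n * \<bar>\<Sum>i=1..n. x i\<bar> \<le> 1 / real n * (real n * e)"
    by (intro mult_left_mono) auto
  then show ?thesis
    using False by (simp add: abs_mult)
qed

lemma cesaro_normalized_integral_tendsto_dense:
  fixes m :: "nat \<Rightarrow> 'a::topological_space measure" and D :: "nat \<Rightarrow> 'a \<Rightarrow> real"
  assumes "compact (UNIV :: 'a set)" "\<And>i. m i \<in> radon_measures" "\<mu>0 \<in> radon_measures"
    and D: "\<And>j. D j \<in> C0" "\<And>f. f \<in> C0 \<Longrightarrow> uniformly_approximable (range D) f"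
    and lim_D: "\<And>j. (\<lambda>k. (1 / real k) * (\<Sum>i=1..k. normalized_integral (m i) (D j)))
      \<longlonglongrightarrow> normalized_integral \<mu>0 (D j)"
    and "f \<in> C0"
  shows "(\<lambda>k. (1 / real k) * (\<Sum>i=1..k. normalized_integral (m i) f)) \<longlonglongrightarrow> normalized_integral \<mu>0 f"
proof (rule LIMSEQ_by_uniform_approximation)
  fix e :: real
  assume "e > 0"
  then obtain j where "\<forall>x. \<bar>f x - D j x\<bar> < e"
    using D(2)[OF \<open>f \<in> C0\<close>] \<open>e > 0\<close> unfolding uniformly_approximable_def by blast
  then have j: "\<And>x. \<bar>f x - D j x\<bar> \<le> e"
    by (simp add: less_imp_le)
  have diff: "normalized_integral \<mu> f - normalized_integral \<mu> (D j) = normalized_integral \<mu> (\<lambda>x. f x - D j x)"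
    if "\<mu> \<in> radon_measures" for \<mu>
    using normalized_integral_diff[OF assms(1) \<open>f \<in> C0\<close> D(1) that] by simp
  have bound: "\<bar>normalized_integral \<mu> (\<lambda>x. f x - D j x)\<bar> \<le> e" if "\<mu> \<in> radon_measures" for \<mu>
    using normalized_integral_abs_le[where f = "\<lambda>x. f x - D j x", OF that j] .
  have "\<bar>(1 / real n) * (\<Sum>i=1..n. normalized_integral (m i) f)
      - (1 / real n) * (\<Sum>i=1..n. normalized_integral (m i) (D j))\<bar> \<le> e" for n
  proof -
    have "\<bar>(1 / real n) * (\<Sum>i=1..n. normalized_integral (m i) f)
        - (1 / real n) * (\<Sum>i=1..n. normalized_integral (m i) (D j))\<bar>
        = \<bar>(1 / real n) * (\<Sum>i=1..n. normalized_integral (m i) (\<lambda>x. f x - D j x))\<bar>"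
      by (simp add: diff[OF assms(2), symmetric] sum_subtractf diff_divide_distrib)
    also have "\<dots> \<le> e"
      by (rule abs_cesaro_mean_le[OF bound[OF assms(2)]])
    finally show ?thesis .
  qed
  moreover have "\<bar>normalized_integral \<mu>0 f - normalized_integral \<mu>0 (D j)\<bar> \<le> e"
    using bound[OF assms(3)] diff[OF assms(3)] by simp
  ultimately show "\<exists>g l. g \<longlonglongrightarrow> l \<and>
      (\<forall>n. \<bar>(1 / real n) * (\<Sum>i=1..n. normalized_integral (m i) f) - g n\<bar> \<le> e) \<and>
      \<bar>normalized_integral \<mu>0 f - l\<bar> \<le> e"
    using lim_D[of j] by blast
qed

lemma rescale_C0_sequence:
  fixes D :: "nat \<Rightarrow> 'a::topological_space \<Rightarrow> real"
  assumes "compact (UNIV :: 'a set)" "\<And>j. D j \<in> C0"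
  obtains w where "\<And>j. w j > 0" "\<And>j x. \<bar>w j * D j x\<bar> \<le> (1 / 2) ^ Suc j"
proof -
  have "\<forall>j. \<exists>b. b \<ge> 0 \<and> (\<forall>x. \<bar>D j x\<bar> \<le> b)"
    using C0_bounded[OF assms(1) assms(2)] by metis
  then obtain B where B: "\<And>j. B j \<ge> 0" "\<And>j x. \<bar>D j x\<bar> \<le> B j"
    by metis
  show thesis
  proof (rule that[of "\<lambda>j. (1 / 2) ^ Suc j / (B j + 1)"])
    show "(1 / 2) ^ Suc j / (B j + 1) > (0 :: real)" for j
      using B(1)[of j] by simp
    have "\<bar>D j x\<bar> / (B j + 1) \<le> 1" for j x
      using B(1)[of j] B(2)[of j x] by simp
    then show "\<bar>(1 / 2) ^ Suc j / (B j + 1) * D j x\<bar> \<le> (1 / 2) ^ Suc j" for j x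
      using B(1)[of j] mult_left_mono[of "\<bar>D j x\<bar> / (B j + 1)" 1 "(1 / 2) ^ Suc j :: real"]
      by (simp add: abs_mult)
  qed
qed

lemma cesaro_mean_tendsto_of_discrepancy:
  fixes a :: "nat \<Rightarrow> real"
  assumes "(\<lambda>k. (\<Sum>i=1..k. a i - c) / real k) \<longlonglongrightarrow> 0"
  shows "(\<lambda>k. (1 / real k) * (\<Sum>i=1..k. a i)) \<longlonglongrightarrow> c"
proof -
  have "(\<lambda>k. (\<Sum>i=1..k. a i - c) / real k + c) \<longlonglongrightarrow> c"
    using tendsto_add[OF assms tendsto_const] by simp
  moreover have "eventually (\<lambda>k. (\<Sum>i=1..k. a i - c) / real k + c = (1 / real k) * (\<Sum>i=1..k. a i))
      sequentially"
    using eventually_gt_at_top[of 0] by eventually_elim (simp add: sum_subtractf field_simps)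
  ultimately show ?thesis
    by (rule Lim_transform_eventually)
qed

definition herding_condition :: "'a::topological_space measure set \<Rightarrow> 'a measure \<Rightarrow> bool" where
  "herding_condition Y \<mu>0 \<longleftrightarrow> (\<forall>g\<in>C0. \<exists>\<mu>\<in>Y. normalized_integral \<mu> g \<le> normalized_integral \<mu>0 g)"

lemma herding_sequence:
  fixes \<mu>0 :: "'a::topological_space measure" and e :: "nat \<Rightarrow> 'a \<Rightarrow> real"
  assumes cpt: "compact (UNIV :: 'a set)" and \<mu>0: "\<mu>0 \<in> radon_measures" and "Y \<subseteq> radon_measures"
    and "herding_condition Y \<mu>0"
    and e: "\<And>j. e j \<in> C0" "\<And>j x. \<bar>e j x\<bar> \<le> (1 / 2) ^ Suc j"
  obtains m where "\<And>k. m k \<in> Y"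
    "\<And>j. (\<lambda>k. (1 / real k) * (\<Sum>i=1..k. normalized_integral (m i) (e j))) \<longlonglongrightarrow> normalized_integral \<mu>0 (e j)"
proof -
  obtain ch where ch: "\<forall>g\<in>C0. ch g \<in> Y \<and> normalized_integral (ch g) g \<le> normalized_integral \<mu>0 g"
    using bchoice[OF assms(4)[unfolded herding_condition_def Bex_def]] by blast
  define V where "V j \<mu> = normalized_integral \<mu> (e j) - normalized_integral \<mu>0 (e j)" for j \<mu>
  have V_bound: "\<bar>V j \<mu>\<bar> \<le> (1 / 2) ^ j" if "\<mu> \<in> radon_measures" for j \<mu>
  proof -
    have "\<bar>normalized_integral \<mu> (e j)\<bar> \<le> (1 / 2) ^ j / 2" "\<bar>normalized_integral \<mu>0 (e j)\<bar> \<le> (1 / 2) ^ j / 2"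
      using normalized_integral_abs_le[where f = "e j", OF that e(2)]
        normalized_integral_abs_le[where f = "e j", OF \<mu>0 e(2)] by simp_all
    then show ?thesis
      unfolding V_def by (auto simp: abs_le_iff)
  qed
  define G where "G k s = (\<lambda>x. \<Sum>l<k. s l * e l x)" for k and s :: "nat \<Rightarrow> real"
  have G: "G k s \<in> C0" for k s
    unfolding G_def using e(1) by (intro C0_sum C0_cmult)
  \<comment> \<open>\<open>S k\<close> is the vector of accumulated discrepancies after \<open>k\<close> steps; the next measure is
    chosen for the test function weighted by it.\<close>
  define S where "S = rec_nat (\<lambda>_. 0) (\<lambda>k s j. s j + V j (ch (G k s)))"
  define m where "m k = ch (G (k - 1) (S (k - 1)))" for k
  have m: "m k \<in> Y" "m k \<in> radon_measures" for k
    using ch G assms(3) by (auto simp: m_def)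
  have S_eq: "S k j = (\<Sum>i=1..k. V j (m i))" for k j
    by (induction k) (simp_all add: S_def m_def)
  have "(\<Sum>l<k. (\<Sum>i=1..k. V l (m i)) * V l (m (Suc k))) \<le> 0" for k
  proof -
    have NI_G: "normalized_integral \<mu> (G k (S k)) = (\<Sum>l<k. S k l * normalized_integral \<mu> (e l))"
      if "\<mu> \<in> radon_measures" for \<mu>
      unfolding G_def using e(1)
      by (simp add: normalized_integral_sum[OF cpt C0_cmult that] normalized_integral_cmult)
    have "(\<Sum>l<k. S k l * V l (m (Suc k)))
        = normalized_integral (m (Suc k)) (G k (S k)) - normalized_integral \<mu>0 (G k (S k))"
      using NI_G[OF m(2)] NI_G[OF \<mu>0] by (simp add: V_def right_diff_distrib sum_subtractf)
    also have "\<dots> \<le> 0"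
      using ch G[of k "S k"] by (simp add: m_def)
    finally show ?thesis
      by (simp add: S_eq)
  qed
  then have vanish: "(\<lambda>k. (\<Sum>i=1..k. V j (m i)) / real k) \<longlonglongrightarrow> 0" for j
    using herding_averages_vanish[of "\<lambda>i j. V j (m i)"] V_bound[OF m(2)] by blast
  show thesis
  proof (rule that[where m = m, OF m(1)])
    show "(\<lambda>k. (1 / real k) * (\<Sum>i=1..k. normalized_integral (m i) (e j))) \<longlonglongrightarrow> normalized_integral \<mu>0 (e j)"
      for j
      using vanish[of j] unfolding V_def by (rule cesaro_mean_tendsto_of_discrepancy)
  qed
qed

lemma herding:
  fixes \<mu>0 :: "'a::{t2_space,second_countable_topology} measure"
  assumes cpt: "compact (UNIV :: 'a set)" and "\<mu>0 \<in> radon_measures" "Y \<subseteq> radon_measures"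
    and "herding_condition Y \<mu>0"
  shows "\<exists>m. (\<forall>k. m k \<in> Y) \<and> (\<forall>f\<in>C0.
    (\<lambda>k. (1 / real k) * (\<Sum>i=1..k. normalized_integral (m i) f)) \<longlonglongrightarrow> normalized_integral \<mu>0 f)"
proof -
  obtain D :: "nat \<Rightarrow> 'a \<Rightarrow> real"
    where D: "\<And>j. D j \<in> C0" "\<And>f. f \<in> C0 \<Longrightarrow> uniformly_approximable (range D) f"
    using countable_uniformly_dense_C0[OF cpt] by blast
  obtain w where w: "\<And>j. w j > 0" "\<And>j x. \<bar>w j * D j x\<bar> \<le> (1 / 2) ^ Suc j"
    using rescale_C0_sequence[where D = D, OF cpt D(1)] by blast
  obtain m where m: "\<And>k. m k \<in> Y" "\<And>j. (\<lambda>k. (1 / real k) * (\<Sum>i=1..k. normalized_integral (m i) (\<lambda>x. w j * D j x)))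
      \<longlonglongrightarrow> normalized_integral \<mu>0 (\<lambda>x. w j * D j x)"
    using herding_sequence[where e = "\<lambda>j x. w j * D j x", OF cpt assms(2-4) C0_cmult[OF D(1)] w(2)] by blast
  have "(\<lambda>k. (1 / real k) * (\<Sum>i=1..k. normalized_integral (m i) (D j))) \<longlonglongrightarrow> normalized_integral \<mu>0 (D j)" for j
    using tendsto_mult_left[OF m(2)[of j], of "1 / w j"] w(1)[of j]
    by (simp add: normalized_integral_cmult sum_distrib_left[symmetric])
  then show ?thesis
    using m(1) cesaro_normalized_integral_tendsto_dense[OF cpt _ assms(2) D] assms(3) by blast
qed

section \<open>The four equivalent conditions\<close>

lemma herding_condition_iff_zero_integral:
  fixes \<mu>0 :: "'a::topological_space measure"
  assumes cpt: "compact (UNIV :: 'a set)" and \<mu>0: "\<mu>0 \<in> radon_measures" and Y: "Y \<subseteq> radon_measures"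
  shows "herding_condition Y \<mu>0 \<longleftrightarrow> (\<forall>f\<in>C0. (\<integral>x. f x \<partial>\<mu>0) = 0 \<longrightarrow> (\<exists>\<mu>\<in>Y. (\<integral>x. f x \<partial>\<mu>) \<le> 0))"
proof
  assume herding: "herding_condition Y \<mu>0"
  show "\<forall>f\<in>C0. (\<integral>x. f x \<partial>\<mu>0) = 0 \<longrightarrow> (\<exists>\<mu>\<in>Y. (\<integral>x. f x \<partial>\<mu>) \<le> 0)"
  proof (intro ballI impI)
    fix f :: "'a \<Rightarrow> real"
    assume "f \<in> C0" "(\<integral>x. f x \<partial>\<mu>0) = 0"
    then obtain \<mu> where "\<mu> \<in> Y" "normalized_integral \<mu> f \<le> 0"
      using herding by (auto simp: herding_condition_def normalized_integral_def)
    moreover have "measure \<mu> UNIV > 0"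
      using \<open>\<mu> \<in> Y\<close> Y radon_measuresD(4) by blast
    ultimately show "\<exists>\<mu>\<in>Y. (\<integral>x. f x \<partial>\<mu>) \<le> 0"
      by (auto simp: normalized_integral_def divide_le_0_iff)
  qed
next
  assume zero: "\<forall>f\<in>C0. (\<integral>x. f x \<partial>\<mu>0) = 0 \<longrightarrow> (\<exists>\<mu>\<in>Y. (\<integral>x. f x \<partial>\<mu>) \<le> 0)"
  show "herding_condition Y \<mu>0"
    unfolding herding_condition_def
  proof
    fix g :: "'a \<Rightarrow> real"
    assume g: "g \<in> C0"
    define c where "c = normalized_integral \<mu>0 g"
    have "(\<integral>x. g x - c \<partial>\<mu>0) = 0"
      using integral_diff_const_radon[OF cpt g \<mu>0] radon_measuresD(4)[OF \<mu>0]
      by (simp add: c_def normalized_integral_def)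
    then obtain \<mu> where "\<mu> \<in> Y" "(\<integral>x. g x - c \<partial>\<mu>) \<le> 0"
      using zero C0_diff[OF g C0_const] by blast
    moreover have "\<mu> \<in> radon_measures"
      using \<open>\<mu> \<in> Y\<close> Y by blast
    ultimately have "normalized_integral \<mu> g \<le> c"
      using integral_diff_const_radon[OF cpt g] radon_measuresD(4)[of \<mu>]
      by (simp add: normalized_integral_def divide_le_eq)
    then show "\<exists>\<mu>\<in>Y. normalized_integral \<mu> g \<le> normalized_integral \<mu>0 g"
      using \<open>\<mu> \<in> Y\<close> by (auto simp: c_def)
  qed
qed

lemma compactin_integral_pos_uniform:
  fixes f :: "'a::topological_space \<Rightarrow> real"
  assumes cpt: "compact (UNIV :: 'a set)" and Y: "compactin weak_star_topology Y"
    and f: "f \<in> C0" and pos: "\<And>\<mu>. \<mu> \<in> Y \<Longrightarrow> (\<integral>x. f x \<partial>\<mu>) > 0"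
  obtains \<epsilon> where "\<epsilon> > 0" "\<And>\<mu>. \<mu> \<in> Y \<Longrightarrow> (\<integral>x. f x \<partial>\<mu>) > \<epsilon> * measure \<mu> UNIV"
proof -
  have Y_radon: "Y \<subseteq> radon_measures"
    using compactin_weak_star_subset_radon[OF Y] .
  define U where "U t = {\<mu> \<in> radon_measures. (\<integral>x. f x - t \<partial>\<mu>) \<in> {0<..}}" for t :: real
  have U: "\<mu> \<in> U t \<longleftrightarrow> \<mu> \<in> radon_measures \<and> (\<integral>x. f x \<partial>\<mu>) > t * measure \<mu> UNIV" for \<mu> t
    using integral_diff_const_radon[OF cpt f] by (auto simp: U_def)
  have "openin weak_star_topology (U t)" for t
    unfolding U_def by (intro openin_weak_star_topology_integral C0_diff[OF f C0_const] open_greaterThan)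
  moreover have "Y \<subseteq> (\<Union>t\<in>{0<..}. U t)"
  proof
    fix \<mu>
    assume "\<mu> \<in> Y"
    then have "\<mu> \<in> radon_measures" "measure \<mu> UNIV > 0" "(\<integral>x. f x \<partial>\<mu>) > 0"
      using Y_radon radon_measuresD(4) pos by blast+
    then have "\<mu> \<in> U ((\<integral>x. f x \<partial>\<mu>) / (2 * measure \<mu> UNIV))"
      by (simp add: U)
    then show "\<mu> \<in> (\<Union>t\<in>{0<..}. U t)"
      using \<open>(\<integral>x. f x \<partial>\<mu>) > 0\<close> \<open>measure \<mu> UNIV > 0\<close> by fastforce
  qed
  ultimately obtain T where T: "finite T" "T \<subseteq> {0<..}" "Y \<subseteq> (\<Union>t\<in>T. U t)"
    using Y unfolding compactin_def by (metis (no_types, lifting) finite_subset_image imageE)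
  show thesis
  proof (rule that)
    \<comment> \<open>The \<open>1\<close> only matters when \<open>Y\<close>, and hence \<open>T\<close>, is empty.\<close>
    show "Min (insert 1 T) > 0"
      using T by (auto simp: Min_gr_iff)
    fix \<mu>
    assume "\<mu> \<in> Y"
    then obtain t where "t \<in> T" "\<mu> \<in> U t"
      using T(3) by blast
    then have "(\<integral>x. f x \<partial>\<mu>) > t * measure \<mu> UNIV" "measure \<mu> UNIV > 0"
      using radon_measuresD(4) by (auto simp: U)
    moreover have "Min (insert 1 T) \<le> t"
      using T(1) \<open>t \<in> T\<close> by simp
    ultimately show "(\<integral>x. f x \<partial>\<mu>) > Min (insert 1 T) * measure \<mu> UNIV"
      by (smt (verit) mult_right_mono)
  qed
qed

lemma neg_integral_condition_of_herding:
  fixes \<mu>0 :: "'a::topological_space measure"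
  assumes \<mu>0: "\<mu>0 \<in> radon_measures" and Y: "Y \<subseteq> radon_measures" and "herding_condition Y \<mu>0"
    and f: "f \<in> C0" "(\<integral>x. f x \<partial>\<mu>0) < 0"
  shows "\<exists>\<mu>\<in>Y. (\<integral>x. f x \<partial>\<mu>) \<le> 0"
proof -
  obtain \<mu> where "\<mu> \<in> Y" "normalized_integral \<mu> f \<le> normalized_integral \<mu>0 f"
    using assms(3) f(1) by (auto simp: herding_condition_def)
  moreover have "normalized_integral \<mu>0 f < 0"
    using divide_neg_pos[OF f(2) radon_measuresD(4)[OF \<mu>0]] by (simp add: normalized_integral_def)
  moreover have "measure \<mu> UNIV > 0"
    using \<open>\<mu> \<in> Y\<close> Y radon_measuresD(4) by blast
  ultimately have "(\<integral>x. f x \<partial>\<mu>) / measure \<mu> UNIV < 0"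
    by (simp add: normalized_integral_def)
  then show ?thesis
    using \<open>\<mu> \<in> Y\<close> \<open>measure \<mu> UNIV > 0\<close> by (auto simp: divide_less_0_iff intro!: bexI[of _ \<mu>])
qed

lemma zero_integral_condition_of_neg:
  fixes \<mu>0 :: "'a::topological_space measure"
  assumes cpt: "compact (UNIV :: 'a set)" and \<mu>0: "\<mu>0 \<in> radon_measures"
    and Y: "compactin weak_star_topology Y"
    and neg: "\<forall>f\<in>C0. (\<integral>x. f x \<partial>\<mu>0) < 0 \<longrightarrow> (\<exists>\<mu>\<in>Y. (\<integral>x. f x \<partial>\<mu>) \<le> 0)"
    and f: "f \<in> C0" "(\<integral>x. f x \<partial>\<mu>0) = 0"
  shows "\<exists>\<mu>\<in>Y. (\<integral>x. f x \<partial>\<mu>) \<le> 0"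
proof (rule ccontr)
  assume "\<not> (\<exists>\<mu>\<in>Y. (\<integral>x. f x \<partial>\<mu>) \<le> 0)"
  then have "\<And>\<mu>. \<mu> \<in> Y \<Longrightarrow> (\<integral>x. f x \<partial>\<mu>) > 0"
    by force
  then obtain \<epsilon> where \<epsilon>: "\<epsilon> > 0" "\<And>\<mu>. \<mu> \<in> Y \<Longrightarrow> (\<integral>x. f x \<partial>\<mu>) > \<epsilon> * measure \<mu> UNIV"
    using compactin_integral_pos_uniform[where f = f, OF cpt Y f(1)] by blast
  have "(\<integral>x. f x - \<epsilon> \<partial>\<mu>0) < 0"
    using integral_diff_const_radon[OF cpt f(1) \<mu>0] f(2) \<epsilon>(1) radon_measuresD(4)[OF \<mu>0] by simp
  then obtain \<mu> where "\<mu> \<in> Y" "(\<integral>x. f x - \<epsilon> \<partial>\<mu>) \<le> 0"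
    using neg C0_diff[OF f(1) C0_const] by blast
  moreover have "\<mu> \<in> radon_measures"
    using \<open>\<mu> \<in> Y\<close> compactin_weak_star_subset_radon[OF Y] by blast
  ultimately show False
    using \<epsilon>(2) integral_diff_const_radon[OF cpt f(1)] by fastforce
qed

lemma herding_condition_iff_neg_integral:
  fixes \<mu>0 :: "'a::topological_space measure"
  assumes cpt: "compact (UNIV :: 'a set)" and \<mu>0: "\<mu>0 \<in> radon_measures"
    and Y: "compactin weak_star_topology Y"
  shows "herding_condition Y \<mu>0 \<longleftrightarrow> (\<forall>f\<in>C0. (\<integral>x. f x \<partial>\<mu>0) < 0 \<longrightarrow> (\<exists>\<mu>\<in>Y. (\<integral>x. f x \<partial>\<mu>) \<le> 0))"
proof -
  have Y_radon: "Y \<subseteq> radon_measures"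
    using compactin_weak_star_subset_radon[OF Y] .
  show ?thesis
    using neg_integral_condition_of_herding[OF \<mu>0 Y_radon] zero_integral_condition_of_neg[OF cpt \<mu>0 Y]
      herding_condition_iff_zero_integral[OF cpt \<mu>0 Y_radon] by blast
qed

lemma cesaro_average_in_meas_convex_hull:
  fixes \<mu>0 :: "'a::topological_space measure" and Y :: "'a measure set"
  assumes cpt: "compact (UNIV :: 'a set)" and \<mu>0: "\<mu>0 \<in> radon_measures" and Y: "Y \<subseteq> radon_measures"
    and m: "\<And>i. m i \<in> Y" and "k \<ge> 1"
  obtains \<nu> where "\<nu> \<in> meas_convex_hull (pos_cone Y)" "\<nu> \<in> radon_measures"
    "\<And>f. f \<in> C0 \<Longrightarrow> (\<integral>x. f x \<partial>\<nu>) = measure \<mu>0 UNIV * ((1 / real k) * (\<Sum>i=1..k. normalized_integral (m i) f))"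
proof -
  have m_radon: "m i \<in> radon_measures" for i
    using m Y by blast
  define M where "M i = scale_measure (ennreal (measure \<mu>0 UNIV / measure (m i) UNIV)) (m i)" for i
  have ratio: "measure \<mu>0 UNIV / measure (m i) UNIV > 0" for i
    using radon_measuresD(4)[OF \<mu>0] radon_measuresD(4)[OF m_radon] by simp
  have M: "M i \<in> pos_cone Y" "M i \<in> radon_measures" for i
    unfolding M_def pos_cone_def using ratio m scale_measure_radon[OF m_radon ratio] by blast+
  obtain \<nu> where \<nu>: "\<nu> \<in> meas_convex_hull (pos_cone Y)" "sets \<nu> = sets borel"
    "\<And>A. A \<in> sets borel \<Longrightarrow> emeasure \<nu> A = (\<Sum>i=1..k. ennreal (1 / real k) * emeasure (M i) A)"
    using meas_convex_hull_average[where M = M and S = "pos_cone Y", OF \<open>k \<ge> 1\<close>] M(1)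
      radon_measuresD(1)[OF M(2)] by blast
  have \<nu>_integral: "(\<integral>x. f x \<partial>\<nu>) = measure \<mu>0 UNIV * ((1 / real k) * (\<Sum>i=1..k. normalized_integral (m i) f))"
    if "f \<in> C0" for f :: "'a \<Rightarrow> real"
  proof -
    have "(\<integral>x. f x \<partial>M i) = measure \<mu>0 UNIV * normalized_integral (m i) f" for i
      using integral_C0_scale_measure[OF cpt that m_radon] ratio[of i] radon_measuresD(4)[OF m_radon]
      by (simp add: M_def normalized_integral_def)
    then show ?thesis
      using integral_C0_finite_combination[OF cpt that, of "{1..k}" \<nu> M "\<lambda>_. 1 / real k"] \<nu> M(2)
      by (simp add: sum_distrib_left mult.left_commute)
  qed
  have "\<nu> \<in> radon_measures"
  proof (rule radon_measuresI)
    show "finite_measure \<nu>"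
      by (rule finite_measure_finite_combination[where I = "{1..k}" and M = M and c = "\<lambda>_. 1 / real k"])
        (use \<nu> radon_measuresD(1,3)[OF M(2)] in auto)
    have "measure \<nu> UNIV = (\<integral>x. 1 \<partial>\<nu>)"
      using sets_eq_imp_space_eq[OF \<nu>(2)] by simp
    also have "\<dots> = measure \<mu>0 UNIV"
      using \<nu>_integral[OF C0_const, of 1] \<open>k \<ge> 1\<close> by (simp add: normalized_integral_const[OF m_radon])
    finally show "measure \<nu> UNIV > 0"
      using radon_measuresD(4)[OF \<mu>0] by simp
  qed (rule \<nu>(2))
  then show thesis
    using that \<nu>(1) \<nu>_integral by blast
qed

lemma cesaro_limit_in_closure_of_convex_hull:
  fixes \<mu>0 :: "'a::topological_space measure"
  assumes cpt: "compact (UNIV :: 'a set)" and \<mu>0: "\<mu>0 \<in> radon_measures" and Y: "Y \<subseteq> radon_measures"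
    and m: "\<And>k. m k \<in> Y"
    and lim: "\<And>f. f \<in> C0 \<Longrightarrow> (\<lambda>k. (1 / real k) * (\<Sum>i=1..k. normalized_integral (m i) f))
      \<longlonglongrightarrow> normalized_integral \<mu>0 f"
  shows "\<mu>0 \<in> weak_star_topology closure_of (meas_convex_hull (pos_cone Y))"
proof -
  define avg where "avg k f = measure \<mu>0 UNIV * ((1 / real k) * (\<Sum>i=1..k. normalized_integral (m i) f))"
    for k f
  have "\<forall>k. \<exists>\<nu>. k \<ge> 1 \<longrightarrow> \<nu> \<in> meas_convex_hull (pos_cone Y) \<and> \<nu> \<in> radon_measures \<and>
      (\<forall>f\<in>C0. (\<integral>x. f x \<partial>\<nu>) = avg k f)"
  proof
    fix k :: nat
    show "\<exists>\<nu>. k \<ge> 1 \<longrightarrow> \<nu> \<in> meas_convex_hull (pos_cone Y) \<and> \<nu> \<in> radon_measures \<and>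
        (\<forall>f\<in>C0. (\<integral>x. f x \<partial>\<nu>) = avg k f)"
    proof (cases "k \<ge> 1")
      case True
      obtain \<nu> where "\<nu> \<in> meas_convex_hull (pos_cone Y)" "\<nu> \<in> radon_measures"
        "\<And>f. f \<in> C0 \<Longrightarrow> (\<integral>x. f x \<partial>\<nu>) = avg k f"
        unfolding avg_def using cesaro_average_in_meas_convex_hull[where m = m, OF cpt \<mu>0 Y m True] by blast
      then show ?thesis
        by blast
    qed simp
  qed
  then obtain \<nu> where \<nu>: "\<forall>k. k \<ge> 1 \<longrightarrow> \<nu> k \<in> meas_convex_hull (pos_cone Y) \<and> \<nu> k \<in> radon_measures \<and>
      (\<forall>f\<in>C0. (\<integral>x. f x \<partial>\<nu> k) = avg k f)"
    using choice[OF \<open>\<forall>k. _\<close>] by blast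
  have "limitin weak_star_topology \<nu> \<mu>0 sequentially"
  proof (rule limitin_weak_star_topologyI[OF \<mu>0])
    show "eventually (\<lambda>k. \<nu> k \<in> radon_measures) sequentially"
      using eventually_ge_at_top[of 1] by eventually_elim (use \<nu> in blast)
    fix f :: "'a \<Rightarrow> real"
    assume f: "f \<in> C0"
    have "(\<lambda>k. avg k f) \<longlonglongrightarrow> measure \<mu>0 UNIV * normalized_integral \<mu>0 f"
      unfolding avg_def by (intro tendsto_mult_left lim f)
    moreover have "eventually (\<lambda>k. avg k f = (\<integral>x. f x \<partial>\<nu> k)) sequentially"
      using eventually_ge_at_top[of 1] by eventually_elim (use \<nu> f in simp)
    ultimately have "(\<lambda>k. \<integral>x. f x \<partial>\<nu> k) \<longlonglongrightarrow> measure \<mu>0 UNIV * normalized_integral \<mu>0 f"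
      by (rule Lim_transform_eventually)
    then show "(\<lambda>k. \<integral>x. f x \<partial>\<nu> k) \<longlonglongrightarrow> (\<integral>x. f x \<partial>\<mu>0)"
      using radon_measuresD(4)[OF \<mu>0] by (simp add: normalized_integral_def)
  qed
  moreover have "eventually (\<lambda>k. \<nu> k \<in> meas_convex_hull (pos_cone Y)) sequentially"
    using eventually_ge_at_top[of 1] by eventually_elim (use \<nu> in blast)
  ultimately show ?thesis
    by (rule in_closure_of_limitin[OF _ sequentially_bot])
qed

lemma closure_of_convex_hull_neg_integral:
  fixes \<mu>0 :: "'a::topological_space measure"
  assumes cpt: "compact (UNIV :: 'a set)" and Y: "Y \<subseteq> radon_measures"
    and closure: "\<mu>0 \<in> weak_star_topology closure_of (meas_convex_hull (pos_cone Y))"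
    and f: "f \<in> C0" "(\<integral>x. f x \<partial>\<mu>0) < 0"
  shows "\<exists>\<mu>\<in>Y. (\<integral>x. f x \<partial>\<mu>) \<le> 0"
proof (rule ccontr)
  assume "\<not> (\<exists>\<mu>\<in>Y. (\<integral>x. f x \<partial>\<mu>) \<le> 0)"
  then have nonneg: "\<And>\<nu>. \<nu> \<in> meas_convex_hull (pos_cone Y) \<Longrightarrow> (\<integral>x. f x \<partial>\<nu>) \<ge> 0"
    using integral_meas_convex_hull_pos_cone_nonneg[OF cpt f(1) Y] by force
  define T where "T = {\<mu> \<in> radon_measures. (\<integral>x. f x \<partial>\<mu>) \<in> {..<0}}"
  have "openin weak_star_topology T"
    unfolding T_def by (rule openin_weak_star_topology_integral[OF f(1) open_lessThan])
  moreover have "\<mu>0 \<in> T"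
    using closure f(2) by (simp add: T_def in_closure_of topspace_weak_star_topology)
  ultimately obtain \<nu> where "\<nu> \<in> meas_convex_hull (pos_cone Y)" "\<nu> \<in> T"
    using closure unfolding in_closure_of by blast
  then show False
    using nonneg[of \<nu>] by (simp add: T_def)
qed

theorem theoremB1:
  fixes Y :: "('a::{t2_space, second_countable_topology}) measure set"
    and \<mu>0 :: "'a measure"
  assumes "compact (UNIV :: 'a set)"
    and "Y \<noteq> {}"
    and "compactin weak_star_topology Y"
    and "\<mu>0 \<in> radon_measures"
  shows "((\<forall>f\<in>C0. (\<integral>x. f x \<partial>\<mu>0) < 0 \<longrightarrow> (\<exists>\<mu>\<in>Y. (\<integral>x. f x \<partial>\<mu>) \<le> 0))
          \<longleftrightarrow> (\<forall>f\<in>C0. (\<integral>x. f x \<partial>\<mu>0) = 0 \<longrightarrow> (\<exists>\<mu>\<in>Y. (\<integral>x. f x \<partial>\<mu>) \<le> 0)))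
       \<and> ((\<forall>f\<in>C0. (\<integral>x. f x \<partial>\<mu>0) = 0 \<longrightarrow> (\<exists>\<mu>\<in>Y. (\<integral>x. f x \<partial>\<mu>) \<le> 0))
          \<longleftrightarrow> \<mu>0 \<in> weak_star_topology closure_of (meas_convex_hull (pos_cone Y)))
       \<and> (\<mu>0 \<in> weak_star_topology closure_of (meas_convex_hull (pos_cone Y))
          \<longleftrightarrow> (\<exists>m :: nat \<Rightarrow> 'a measure. (\<forall>k. m k \<in> Y) \<and>
                (\<forall>f\<in>C0. (\<lambda>k. (1 / real k) * (\<Sum>i=1..k. (1 / measure (m i) UNIV) * (\<integral>x. f x \<partial>m i)))
                   \<longlonglongrightarrow> (1 / measure \<mu>0 UNIV) * (\<integral>x. f x \<partial>\<mu>0))))"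
proof -
  note cpt = assms(1) and \<mu>0 = assms(4)
  have Y: "Y \<subseteq> radon_measures"
    using compactin_weak_star_subset_radon[OF assms(3)] .
  show ?thesis
    using herding_condition_iff_neg_integral[OF cpt \<mu>0 assms(3)]
      herding_condition_iff_zero_integral[OF cpt \<mu>0 Y]
      herding[OF cpt \<mu>0 Y]
      cesaro_limit_in_closure_of_convex_hull[OF cpt \<mu>0 Y]
      closure_of_convex_hull_neg_integral[OF cpt Y]
    unfolding normalized_integral_def by blast
qed

end
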